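(* Let $\eta$ be an LTS-to-L$^2$TS transformation that in addition preserves and reflects $=_T^{\lambda}$, let $\mathcal{L}$ be an LTS and $s,t$ states of $\mathcal{L}$. Then $s=_T^{\lambda}t$ if and only if for every $\mathsf{LTL}_{-\mathsf{X}}$ formula $\psi$: $s\models^{\eta}\psi\iff t\models^{\eta}\psi$.
   Context: Fix a set $\mathrm{Act}$ of actions containing $\tau$ and a set $\mathbf{AP}$ of atomic propositions. An LTS is $(S,\to)$ with $\to\subseteq S\times\mathrm{Act}\times S$; paths are alternating sequences $s_0,a_1,s_1,\dots$ with $s_{k-1}\xrightarrow{a_k}s_k$, maximal if infinite or ending in a state without outgoing transitions. A colouring $\mathcal{C}$ maps states to colours; $\mathcal{C}(\pi)$ is obtained from $\mathcal{C}(s_0),a_1,\mathcal{C}(s_1),\dots$ by contracting every finite maximal consecutive subsequence $C,\tau,C,\dots,\tau,C$ and every infinite one $C,\tau,C,\tau,\dots$ to $C$; for $\pi$ from $s$ it is a $\mathcal{C}$-coloured trace of $s$, complete if $\pi$ is maximal, divergent if $\pi$ is infinite and $\mathcal{C}(\pi)$ finite. $\mathcal{C}$ is consistent if equally coloured states have the same $\mathcal{C}$-coloured traces, fully consistent if they have the same complete ones; a consistent $\mathcal{C}$ preserves divergence if they have the same divergent ones. $s\leftrightarrow_b t$ / $s\leftrightarrow_b^{ds}t$ / $s\leftrightarrow_b^{\Delta}t$ iff some consistent / fully consistent / consistent divergence preserving $\mathcal{C}$ has $\mathcal{C}(s)=\mathcal{C}(t)$. With $\mathbf{T}$ the trivial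 colouring (one colour for all states), $s=_T^{\lambda}t$ iff $s,t$ have the same complete $\mathbf{T}$-coloured traces. A Kripke structure is $(S,L,\to)$ with $L:S\to\mathcal{P}(\mathbf{AP})$, $\to\subseteq S\times S$; paths and maximal paths are sequences of states defined analogously. An L$^2$TS is $(S,L,\to)$ with $L:S\to\mathcal{P}(\mathbf{AP})$, $\to\subseteq S\times\mathrm{Act}\times S$; associated LTS $(S,\to)$, associated Kripke structure $(S,L,\{(s,t)\mid\exists a.\ s\xrightarrow{a}t\})$. It is consistent if (i) $s\xrightarrow{a}t$ implies ($L(s)=L(t)$ iff $a=\tau$); (ii) $s\xrightarrow{a}t$, $s'\xrightarrow{a}t'$, $L(s)=L(s')$ imply $L(t)=L(t')$; (iii) $s\xrightarrow{a}t$, $s'\xrightarrow{b}t'$, $L(s)=L(s')$, $L(t)=L(t')$ imply $a=b$. For an equivalence $\sim$ defined on LTSs and states $u,v$ of an L$^2$TS, $u\sim v$ means $L(u)=L(v)$ and $u\sim v$ in the associated LTS. An LTS-to-L$^2$TS transformation $\eta$ assigns to each LTS $\mathcal{L}$ a consistent L$^2$TS $\eta(\mathcal{L})$ and to each state $s$ of $\mathcal{L}$ a state $\eta(s)$ of $\eta(\mathcal{L})$ such that $s\sim t\iff\eta(s)\sim\eta(t)$ for each $\sim\in\{\leftrightarrow_b,\leftrightarrow_b^{ds},\leftrightarrow_b^{\Delta}\}$; it preserves and reflects $=_T^{\lambda}$ if also $s=_T^{\lambda}t\iff\eta(s)=_T^{\lambda}\eta(t)$. $\mathsf{LTL}_{-\mathsf{X}}$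 formulas: $\psi::=p\mid\neg\psi\mid\bigwedge\Psi'\mid\psi\,\mathsf{U}\,\psi$ ($p\in\mathbf{AP}$, $\Psi'$ arbitrary sets); on maximal paths of a Kripke structure: $\pi\models p$ iff $p$ is in the label of its first state; negation/conjunction as usual; $\pi\models\psi\,\mathsf{U}\,\psi'$ iff some suffix $\pi'$ of $\pi$ has $\pi'\models\psi'$ and $\pi''\models\psi$ for every suffix $\pi''$ of $\pi$ of which $\pi'$ is a proper suffix; a state satisfies $\psi$ iff all maximal paths from it do. For $s$ a state of $\mathcal{L}$: $s\models^{\eta}\psi$ iff $\eta(s)\models\psi$ in the Kripke structure associated to $\eta(\mathcal{L})$. *)

theory Defs
  imports Main "HOL-Library.Extended_Nat" "HOL-Library.Infinite_Set"
begin

text \<open>An LTS over state type 's and action type 'a is given by its transition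
relation; its states are all elements of type 's. The silent action tau is a
parameter of every notion that needs it.\<close>

type_synonym ('s,'a) lts = "('s \<times> 'a \<times> 's) set"

text \<open>A path s_0 a_1 s_1 ... is represented by a state sequence st, an action
sequence ac and a length len (number of transitions, possibly infinite):
the k-th transition (k = 0,1,...) is st k --ac k--> st (Suc k), for Suc k \<le> len.\<close>

definition is_path :: "('s,'a) lts \<Rightarrow> (nat \<Rightarrow> 's) \<Rightarrow> (nat \<Rightarrow> 'a) \<Rightarrow> enat \<Rightarrow> bool" where
  "is_path R st ac len \<longleftrightarrow> (\<forall>k. enat (Suc k) \<le> len \<longrightarrow> (st k, ac k, st (Suc k)) \<in> R)"

definition is_maximal_path :: "('s,'a) lts \<Rightarrow> (nat \<Rightarrow> 's) \<Rightarrow> (nat \<Rightarrow> 'a) \<Rightarrow> enat \<Rightarrow> bool" where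
  "is_maximal_path R st ac len \<longleftrightarrow> is_path R st ac len \<and>
     (len = \<infinity> \<or> (\<exists>n. len = enat n \<and> \<not> (\<exists>a u. (st n, a, u) \<in> R)))"

datatype ('a,'c) ctrace = FinT 'c "('a \<times> 'c) list" | InfT 'c "nat \<Rightarrow> 'a \<times> 'c"

text \<open>Steps that survive the contraction: exactly the steps that are not
tau-steps between equally coloured states.\<close>

definition visible_steps :: "'a \<Rightarrow> ('s \<Rightarrow> 'c) \<Rightarrow> (nat \<Rightarrow> 's) \<Rightarrow> (nat \<Rightarrow> 'a) \<Rightarrow> enat \<Rightarrow> nat set" where
  "visible_steps tau C st ac len =
     {k. enat (Suc k) \<le> len \<and> (ac k \<noteq> tau \<or> C (st k) \<noteq> C (st (Suc k)))}"

definition coloured_trace :: "'a \<Rightarrow> ('s \<Rightarrow> 'c) \<Rightarrow> (nat \<Rightarrow> 's) \<Rightarrow> (nat \<Rightarrow> 'a) \<Rightarrow> enat \<Rightarrow> ('a,'c) ctrace" where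
  "coloured_trace tau C st ac len =
     (let V = visible_steps tau C st ac len in
      if finite V then FinT (C (st 0)) (map (\<lambda>k. (ac k, C (st (Suc k)))) (sorted_list_of_set V))
      else InfT (C (st 0)) (\<lambda>n. let k = Infinite_Set.enumerate V n in (ac k, C (st (Suc k)))))"

definition ctraces :: "'a \<Rightarrow> ('s,'a) lts \<Rightarrow> ('s \<Rightarrow> 'c) \<Rightarrow> 's \<Rightarrow> ('a,'c) ctrace set" where
  "ctraces tau R C s = {coloured_trace tau C st ac len | st ac len. is_path R st ac len \<and> st 0 = s}"

definition complete_ctraces :: "'a \<Rightarrow> ('s,'a) lts \<Rightarrow> ('s \<Rightarrow> 'c) \<Rightarrow> 's \<Rightarrow> ('a,'c) ctrace set" where
  "complete_ctraces tau R C s =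
     {coloured_trace tau C st ac len | st ac len. is_maximal_path R st ac len \<and> st 0 = s}"

definition divergent_ctraces :: "'a \<Rightarrow> ('s,'a) lts \<Rightarrow> ('s \<Rightarrow> 'c) \<Rightarrow> 's \<Rightarrow> ('a,'c) ctrace set" where
  "divergent_ctraces tau R C s =
     {coloured_trace tau C st ac len | st ac len. is_path R st ac len \<and> st 0 = s \<and> len = \<infinity>
        \<and> finite (visible_steps tau C st ac len)}"

definition consistent_col :: "'a \<Rightarrow> ('s,'a) lts \<Rightarrow> ('s \<Rightarrow> 'c) \<Rightarrow> bool" where
  "consistent_col tau R C \<longleftrightarrow> (\<forall>s t. C s = C t \<longrightarrow> ctraces tau R C s = ctraces tau R C t)"

definition fully_consistent_col :: "'a \<Rightarrow> ('s,'a) lts \<Rightarrow> ('s \<Rightarrow> 'c) \<Rightarrow> bool" where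
  "fully_consistent_col tau R C \<longleftrightarrow>
     (\<forall>s t. C s = C t \<longrightarrow> complete_ctraces tau R C s = complete_ctraces tau R C t)"

definition div_preserving_col :: "'a \<Rightarrow> ('s,'a) lts \<Rightarrow> ('s \<Rightarrow> 'c) \<Rightarrow> bool" where
  "div_preserving_col tau R C \<longleftrightarrow> consistent_col tau R C \<and>
     (\<forall>s t. C s = C t \<longrightarrow> divergent_ctraces tau R C s = divergent_ctraces tau R C t)"

text \<open>Colours are taken to be sets of states (w.l.o.g.: whether a colouring is
(fully) consistent / divergence preserving only depends on its kernel).\<close>

definition branching_bisim :: "'a \<Rightarrow> ('s,'a) lts \<Rightarrow> 's \<Rightarrow> 's \<Rightarrow> bool" where
  "branching_bisim tau R s t \<longleftrightarrow> (\<exists>C :: 's \<Rightarrow> 's set. consistent_col tau R C \<and> C s = C t)"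

definition branching_bisim_ds :: "'a \<Rightarrow> ('s,'a) lts \<Rightarrow> 's \<Rightarrow> 's \<Rightarrow> bool" where
  "branching_bisim_ds tau R s t \<longleftrightarrow> (\<exists>C :: 's \<Rightarrow> 's set. fully_consistent_col tau R C \<and> C s = C t)"

definition branching_bisim_div :: "'a \<Rightarrow> ('s,'a) lts \<Rightarrow> 's \<Rightarrow> 's \<Rightarrow> bool" where
  "branching_bisim_div tau R s t \<longleftrightarrow> (\<exists>C :: 's \<Rightarrow> 's set. div_preserving_col tau R C \<and> C s = C t)"

text \<open>Weak completed trace equivalence =_T^lambda via the trivial colouring.\<close>

definition trace_eq :: "'a \<Rightarrow> ('s,'a) lts \<Rightarrow> 's \<Rightarrow> 's \<Rightarrow> bool" where
  "trace_eq tau R s t \<longleftrightarrow> complete_ctraces tau R (\<lambda>_. ()) s = complete_ctraces tau R (\<lambda>_. ()) t"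

type_synonym ('q,'a,'ap) l2ts = "('q \<Rightarrow> 'ap set) \<times> ('q \<times> 'a \<times> 'q) set"

definition consistent_l2ts :: "'a \<Rightarrow> ('q,'a,'ap) l2ts \<Rightarrow> bool" where
  "consistent_l2ts tau M \<longleftrightarrow> (case M of (L, R) \<Rightarrow>
     (\<forall>s a t. (s,a,t) \<in> R \<longrightarrow> (L s = L t \<longleftrightarrow> a = tau)) \<and>
     (\<forall>s a t s' t'. (s,a,t) \<in> R \<longrightarrow> (s',a,t') \<in> R \<longrightarrow> L s = L s' \<longrightarrow> L t = L t') \<and>
     (\<forall>s a t s' b t'. (s,a,t) \<in> R \<longrightarrow> (s',b,t') \<in> R \<longrightarrow> L s = L s' \<longrightarrow> L t = L t' \<longrightarrow> a = b))"

definition l2_equiv :: "(('q,'a) lts \<Rightarrow> 'q \<Rightarrow> 'q \<Rightarrow> bool) \<Rightarrow> ('q,'a,'ap) l2ts \<Rightarrow> 'q \<Rightarrow> 'q \<Rightarrow> bool" where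
  "l2_equiv eq M u v \<longleftrightarrow> fst M u = fst M v \<and> eq (snd M) u v"

definition lts_to_l2ts ::
  "'a \<Rightarrow> (('s,'a) lts \<Rightarrow> ('q,'a,'ap) l2ts) \<Rightarrow> (('s,'a) lts \<Rightarrow> 's \<Rightarrow> 'q) \<Rightarrow> bool" where
  "lts_to_l2ts tau etaL etaS \<longleftrightarrow> (\<forall>R.
     consistent_l2ts tau (etaL R) \<and>
     (\<forall>s t. branching_bisim tau R s t \<longleftrightarrow>
            l2_equiv (branching_bisim tau) (etaL R) (etaS R s) (etaS R t)) \<and>
     (\<forall>s t. branching_bisim_ds tau R s t \<longleftrightarrow>
            l2_equiv (branching_bisim_ds tau) (etaL R) (etaS R s) (etaS R t)) \<and>
     (\<forall>s t. branching_bisim_div tau R s t \<longleftrightarrow>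
            l2_equiv (branching_bisim_div tau) (etaL R) (etaS R s) (etaS R t)))"

definition preserves_reflects_trace_eq ::
  "'a \<Rightarrow> (('s,'a) lts \<Rightarrow> ('q,'a,'ap) l2ts) \<Rightarrow> (('s,'a) lts \<Rightarrow> 's \<Rightarrow> 'q) \<Rightarrow> bool" where
  "preserves_reflects_trace_eq tau etaL etaS \<longleftrightarrow> (\<forall>R s t.
     trace_eq tau R s t \<longleftrightarrow> l2_equiv (trace_eq tau) (etaL R) (etaS R s) (etaS R t))"

definition kripke_of :: "('q,'a,'ap) l2ts \<Rightarrow> ('q \<Rightarrow> 'ap set) \<times> ('q \<times> 'q) set" where
  "kripke_of M = (fst M, {(u, v). \<exists>a. (u, a, v) \<in> snd M})"

definition is_maximal_kpath :: "('q \<times> 'q) set \<Rightarrow> (nat \<Rightarrow> 'q) \<Rightarrow> enat \<Rightarrow> bool" where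
  "is_maximal_kpath R st len \<longleftrightarrow>
     (\<forall>k. enat (Suc k) \<le> len \<longrightarrow> (st k, st (Suc k)) \<in> R) \<and>
     (len = \<infinity> \<or> (\<exists>n. len = enat n \<and> \<not> (\<exists>v. (st n, v) \<in> R)))"

text \<open>LTL_{-X} formulas. Conjunction is over an arbitrary set of formulas, given
as a family indexed by a subset I of the index type 'i.\<close>

datatype ('ap,'i) ltl =
    Atom 'ap
  | Neg "('ap,'i) ltl"
  | Conj "'i set" "'i \<Rightarrow> ('ap,'i) ltl"
  | Until "('ap,'i) ltl" "('ap,'i) ltl"

text \<open>Satisfaction on a path (st, len); the suffix starting at position j is
(\<lambda>n. st (n + j), len - j).\<close>

primrec sat_path :: "('q \<Rightarrow> 'ap set) \<Rightarrow> ('ap,'i) ltl \<Rightarrow> (nat \<Rightarrow> 'q) \<Rightarrow> enat \<Rightarrow> bool" where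
  "sat_path L (Atom p) st len = (p \<in> L (st 0))"
| "sat_path L (Neg \<psi>) st len = (\<not> sat_path L \<psi> st len)"
| "sat_path L (Conj I f) st len = (\<forall>i\<in>I. sat_path L (f i) st len)"
| "sat_path L (Until \<psi> \<psi>') st len =
     (\<exists>j. enat j \<le> len \<and> sat_path L \<psi>' (\<lambda>n. st (n + j)) (len - enat j) \<and>
          (\<forall>i<j. sat_path L \<psi> (\<lambda>n. st (n + i)) (len - enat i)))"

definition sat_state :: "('q \<Rightarrow> 'ap set) \<times> ('q \<times> 'q) set \<Rightarrow> 'q \<Rightarrow> ('ap,'i) ltl \<Rightarrow> bool" where
  "sat_state K q \<psi> \<longleftrightarrow>
     (\<forall>st len. is_maximal_kpath (snd K) st len \<and> st 0 = q \<longrightarrow> sat_path (fst K) \<psi> st len)"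

definition models_eta ::
  "(('s,'a) lts \<Rightarrow> ('q,'a,'ap) l2ts) \<Rightarrow> (('s,'a) lts \<Rightarrow> 's \<Rightarrow> 'q) \<Rightarrow> ('s,'a) lts \<Rightarrow> 's \<Rightarrow> ('ap,'i) ltl \<Rightarrow> bool" where
  "models_eta etaL etaS R s \<psi> \<longleftrightarrow> sat_state (kripke_of (etaL R)) (etaS R s) \<psi>"

end

theory Submission
  imports Defs
begin

text \<open>In a consistent L2TS a transition is invisible iff it preserves the label, and the
  labels at both ends of a visible step determine its action and vice versa. Hence two paths
  starting in equally labelled states have the same trivially coloured trace iff their label
  sequences are stutter equivalent, i.e. have the same sequence of label blocks. Formulas of
  LTL without next cannot distinguish stutter equivalent paths, and conversely every stutter
  class of paths is defined by a formula that prescribes its blocks one after the other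
  (using infinitary conjunction for infinitely many blocks). So two equally labelled states
  are completed trace equivalent iff they satisfy the same formulas, and the transformation
  transfers this back to the original LTS.\<close>

section \<open>Label changes and blocks\<close>

fun changes :: "(nat \<Rightarrow> 'l) \<Rightarrow> nat \<Rightarrow> nat" where
  "changes l 0 = 0"
| "changes l (Suc n) = changes l n + (if l n = l (Suc n) then 0 else 1)"

lemma changes_mono: "m \<le> n \<Longrightarrow> changes l m \<le> changes l n"
  by (induction n rule: dec_induct) auto

lemma changes_eq_imp_eq_le:
  assumes "m \<le> n" and "changes l m = changes l n"
  shows "l m = l n"
  using assms
proof (induction n rule: dec_induct)
  case (step n)
  have "changes l m \<le> changes l n" "changes l n \<le> changes l (Suc n)"
    using changes_mono[OF step.hyps(1)] by simp_all
  with step.prems have "changes l m = changes l n" and step_eq: "changes l n = changes l (Suc n)"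
    by linarith+
  from step.IH[OF this(1)] have "l m = l n" .
  moreover from step_eq have "l n = l (Suc n)" by (simp split: if_splits)
  ultimately show ?case by simp
qed simp

lemma changes_eq_imp_eq:
  assumes "changes l m = changes l n"
  shows "l m = l n"
proof (cases "m \<le> n")
  case True
  then show ?thesis using assms by (rule changes_eq_imp_eq_le)
next
  case False
  then have "n \<le> m" by simp
  then show ?thesis using assms[symmetric] by (rule changes_eq_imp_eq_le[symmetric])
qed

lemma changes_add: "changes l (k + j) = changes l j + changes (\<lambda>n. l (n + j)) k"
  by (induction k) auto

lemma changes_intermediate: "m \<le> changes l n \<Longrightarrow> \<exists>k\<le>n. changes l k = m"
proof (induction n)
  case (Suc n)
  show ?case
  proof (cases "m \<le> changes l n")
    case True
    then show ?thesis using Suc.IH le_SucI by blast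
  next
    case False
    then have "m = changes l (Suc n)" using Suc.prems by (simp split: if_splits)
    then show ?thesis by blast
  qed
qed simp

lemma changes_eq_0_iff: "changes l n = 0 \<longleftrightarrow> (\<forall>i\<le>n. l i = l 0)"
proof
  assume n: "changes l n = 0"
  show "\<forall>i\<le>n. l i = l 0"
  proof (intro allI impI)
    fix i assume "i \<le> n"
    with n changes_mono[of i n l] have "changes l i = changes l 0" by simp
    then show "l i = l 0" by (rule changes_eq_imp_eq)
  qed
next
  assume "\<forall>i\<le>n. l i = l 0"
  then have "\<forall>i<n. l i = l (Suc i)" by (metis Suc_leI less_imp_le)
  then show "changes l n = 0"
  proof (induction n)
    case (Suc n)
    have "changes l n = 0" using Suc.prems by (intro Suc.IH) auto
    moreover have "l n = l (Suc n)" using Suc.prems by blast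
    ultimately show ?case by simp
  qed simp
qed

lemma changes_first_block:
  assumes "\<forall>i<j. l i = l 0" and "l j \<noteq> l 0"
  shows "changes l i = (if i < j then 0 else Suc (changes (\<lambda>n. l (n + j)) (i - j)))"
proof (cases "i < j")
  case True
  then have "\<forall>k\<le>i. l k = l 0" using assms(1) le_less_trans by blast
  with True show ?thesis using changes_eq_0_iff by metis
next
  case False
  obtain p where p: "j = Suc p" using assms(2) by (cases j) auto
  then have "\<forall>k\<le>p. l k = l 0" using assms(1) le_imp_less_Suc by blast
  then have "changes l p = 0" "l p = l 0" using changes_eq_0_iff by blast+
  with p assms(2) have "changes l j = 1" by simp
  with False changes_add[of l "i - j" j] show ?thesis by simp
qed

lemma enat_le_diff_iff: "enat j \<le> len \<Longrightarrow> enat n \<le> len - enat j \<longleftrightarrow> enat (n + j) \<le> len"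
  by (cases len) auto

definition block_range :: "(nat \<Rightarrow> 'l) \<Rightarrow> enat \<Rightarrow> nat set" where
  "block_range l len = {changes l k | k. enat k \<le> len}"

text \<open>Blocks are numbered from \<open>0\<close>; the value is junk unless \<open>m \<in> block_range l len\<close>.\<close>

definition block_label :: "(nat \<Rightarrow> 'l) \<Rightarrow> enat \<Rightarrow> nat \<Rightarrow> 'l" where
  "block_label l len m = l (SOME k. enat k \<le> len \<and> changes l k = m)"

lemma mem_block_range_iff: "m \<in> block_range l len \<longleftrightarrow> (\<exists>k. enat k \<le> len \<and> changes l k = m)"
  unfolding block_range_def by auto

lemma changes_in_block_range: "enat k \<le> len \<Longrightarrow> changes l k \<in> block_range l len"
  unfolding mem_block_range_iff by blast

lemma zero_in_block_range: "0 \<in> block_range l len"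
  using changes_in_block_range[of 0 len l] by (simp add: zero_enat_def[symmetric])

lemma block_label_changes:
  assumes "enat k \<le> len"
  shows "block_label l len (changes l k) = l k"
proof -
  have "\<exists>k'. enat k' \<le> len \<and> changes l k' = changes l k" using assms by blast
  then have "changes l (SOME k'. enat k' \<le> len \<and> changes l k' = changes l k) = changes l k"
    by (rule someI2_ex) blast
  then show ?thesis unfolding block_label_def by (rule changes_eq_imp_eq)
qed

lemma block_range_downward_closed:
  assumes "m \<in> block_range l len" and "i \<le> m"
  shows "i \<in> block_range l len"
proof -
  obtain k where k: "enat k \<le> len" "changes l k = m" using assms(1) mem_block_range_iff by blast
  obtain k' where "k' \<le> k" "changes l k' = i" using changes_intermediate assms(2) k(2) by blast
  with k(1) show ?thesis
    using changes_in_block_range[of k' len l] order_trans[of "enat k'" "enat k" len] by simp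
qed

lemma block_range_eq_atMost:
  "n \<in> block_range l len \<Longrightarrow> block_range l len \<subseteq> {..n} \<Longrightarrow> block_range l len = {..n}"
  using block_range_downward_closed[of n l len] by (auto simp: atMost_iff)

lemma block_label_Suc_neq:
  assumes "Suc m \<in> block_range l len"
  shows "block_label l len m \<noteq> block_label l len (Suc m)"
proof -
  obtain k0 where k0: "enat k0 \<le> len" "changes l k0 = Suc m"
    using assms mem_block_range_iff by blast
  define k where "k = (LEAST k. changes l k = Suc m)"
  have k: "changes l k = Suc m" unfolding k_def using k0(2) by (rule LeastI)
  have "k \<le> k0" unfolding k_def using k0(2) by (rule Least_le)
  with k0(1) have k_len: "enat k \<le> len" by (meson enat_ord_simps(1) order_trans)
  obtain p where p: "k = Suc p" using k by (cases k) auto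
  have "changes l p \<noteq> Suc m"
    using not_less_Least[of p "\<lambda>k. changes l k = Suc m"] p unfolding k_def by simp
  with k p have "l p \<noteq> l k" and "changes l p = m"
    by (auto split: if_splits)
  moreover have "enat p \<le> len" using k_len p by (meson Suc_ile_eq less_imp_le)
  ultimately show ?thesis using block_label_changes k k_len by metis
qed

lemma block_range_suffix:
  assumes "enat j \<le> len"
  shows "block_range (\<lambda>n. l (n + j)) (len - enat j) = {m. changes l j + m \<in> block_range l len}"
proof (intro set_eqI iffI CollectI)
  fix m assume "m \<in> block_range (\<lambda>n. l (n + j)) (len - enat j)"
  then obtain k where k: "enat (k + j) \<le> len" "changes (\<lambda>n. l (n + j)) k = m"
    using enat_le_diff_iff[OF assms] mem_block_range_iff by blast
  then have "changes l (k + j) = changes l j + m" by (simp add: changes_add)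
  with changes_in_block_range[OF k(1), of l] show "changes l j + m \<in> block_range l len" by simp
next
  fix m assume "m \<in> {m. changes l j + m \<in> block_range l len}"
  then obtain k where k: "enat k \<le> len" "changes l k = changes l j + m"
    using mem_block_range_iff by force
  show "m \<in> block_range (\<lambda>n. l (n + j)) (len - enat j)"
  proof (cases "m = 0")
    case True
    then show ?thesis by (simp add: zero_in_block_range)
  next
    case False
    then have "j \<le> k" using k(2) changes_mono[of k j l] by (cases "j \<le> k") auto
    then have "enat (k - j) \<le> len - enat j" "changes (\<lambda>n. l (n + j)) (k - j) = m"
      using k changes_add[of l "k - j" j] enat_le_diff_iff[OF assms] by simp_all
    then show ?thesis unfolding mem_block_range_iff by blast
  qed
qed

lemma block_label_suffix:
  assumes "enat j \<le> len" and "m \<in> block_range (\<lambda>n. l (n + j)) (len - enat j)"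
  shows "block_label (\<lambda>n. l (n + j)) (len - enat j) m = block_label l len (changes l j + m)"
proof -
  obtain k where k: "enat k \<le> len - enat j" "changes (\<lambda>n. l (n + j)) k = m"
    using assms(2) mem_block_range_iff by blast
  then have kj: "enat (k + j) \<le> len" using enat_le_diff_iff[OF assms(1)] by simp
  have "block_label (\<lambda>n. l (n + j)) (len - enat j) m = l (k + j)"
    using block_label_changes[OF k(1), of "\<lambda>n. l (n + j)"] k(2) by simp
  also have "\<dots> = block_label l len (changes l (k + j))"
    using block_label_changes[OF kj, of l] by simp
  finally show ?thesis using k(2) by (simp add: changes_add)
qed

section \<open>Stutter equivalence\<close>

text \<open>Two label sequences are stutter equivalent iff they have the same stutter-free
  reduction: the same set of block indices and the same label on each block.\<close>

definition stutter_equiv :: "(nat \<Rightarrow> 'l) \<Rightarrow> enat \<Rightarrow> (nat \<Rightarrow> 'l) \<Rightarrow> enat \<Rightarrow> bool" where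
  "stutter_equiv l len l' len' \<longleftrightarrow> block_range l len = block_range l' len' \<and>
     (\<forall>m\<in>block_range l len. block_label l len m = block_label l' len' m)"

lemma stutter_equiv_sym: "stutter_equiv l len l' len' \<Longrightarrow> stutter_equiv l' len' l len"
  unfolding stutter_equiv_def by simp

lemma stutter_equivI:
  assumes "block_range l len = block_range l' len'"
    and "\<And>k. enat k \<le> len \<Longrightarrow> l k = B (changes l k)"
    and "\<And>k. enat k \<le> len' \<Longrightarrow> l' k = B (changes l' k)"
  shows "stutter_equiv l len l' len'"
  unfolding stutter_equiv_def
proof (intro conjI ballI assms(1))
  fix m assume m: "m \<in> block_range l len"
  obtain k where k: "enat k \<le> len" "changes l k = m" using m mem_block_range_iff by blast
  obtain k' where k': "enat k' \<le> len'" "changes l' k' = m" using m assms(1) mem_block_range_iff by metis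
  show "block_label l len m = block_label l' len' m"
    using block_label_changes[OF k(1), of l] block_label_changes[OF k'(1), of l'] assms(2)[OF k(1)]
      assms(3)[OF k'(1)] k(2) k'(2) by simp
qed

lemma stutter_equiv_label_eq:
  assumes "stutter_equiv l len l' len'" "enat k \<le> len" "enat k' \<le> len'" "changes l k = changes l' k'"
  shows "l k = l' k'"
proof -
  have "changes l k \<in> block_range l len" using assms(2) by (rule changes_in_block_range)
  then have "block_label l len (changes l k) = block_label l' len' (changes l' k')"
    using assms(1,4) unfolding stutter_equiv_def by simp
  then show ?thesis
    using block_label_changes[OF assms(2), of l] block_label_changes[OF assms(3), of l'] by simp
qed

lemma stutter_equiv_matching_position:
  assumes "stutter_equiv l len l' len'" "enat k \<le> len"
  obtains k' where "enat k' \<le> len'" "changes l' k' = changes l k"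
proof -
  have "changes l k \<in> block_range l' len'"
    using assms changes_in_block_range unfolding stutter_equiv_def by blast
  then show ?thesis using that mem_block_range_iff by metis
qed

lemma stutter_equiv_suffix:
  assumes se: "stutter_equiv l len l' len'"
    and "enat j \<le> len" "enat j' \<le> len'" "changes l j = changes l' j'"
  shows "stutter_equiv (\<lambda>n. l (n + j)) (len - enat j) (\<lambda>n. l' (n + j')) (len' - enat j')"
proof -
  let ?s = "\<lambda>n. l (n + j)" and ?s' = "\<lambda>n. l' (n + j')"
  have range: "block_range ?s (len - enat j) = block_range ?s' (len' - enat j')"
    using se assms(4) unfolding block_range_suffix[OF assms(2)] block_range_suffix[OF assms(3)]
      stutter_equiv_def by simp
  have "block_label ?s (len - enat j) m = block_label ?s' (len' - enat j') m"
    if "m \<in> block_range ?s (len - enat j)" for m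
  proof -
    have "changes l j + m \<in> block_range l len"
      using that block_range_suffix[OF assms(2), of l] by simp
    have "block_label ?s (len - enat j) m = block_label l len (changes l j + m)"
      by (rule block_label_suffix[OF assms(2) that])
    also have "\<dots> = block_label l' len' (changes l' j' + m)"
      using se assms(4) \<open>changes l j + m \<in> block_range l len\<close> unfolding stutter_equiv_def by simp
    also have "\<dots> = block_label ?s' (len' - enat j') m"
      using that range by (simp add: block_label_suffix[OF assms(3)])
    finally show ?thesis .
  qed
  with range show ?thesis unfolding stutter_equiv_def by blast
qed

text \<open>Position matching for the until operator: the first position \<open>j'\<close> of the block
  containing \<open>j\<close> is preceded only by positions matching positions before \<open>j\<close>.\<close>

lemma stutter_equiv_until_position:
  assumes se: "stutter_equiv l len l' len'" and j: "enat j \<le> len"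
  obtains j' where "enat j' \<le> len'" "changes l' j' = changes l j"
    and "\<And>i'. i' < j' \<Longrightarrow> \<exists>i<j. enat i \<le> len \<and> enat i' \<le> len' \<and> changes l i = changes l' i'"
proof -
  let ?P = "\<lambda>k'. enat k' \<le> len' \<and> changes l' k' = changes l j"
  define j' where "j' = (LEAST k'. ?P k')"
  have "\<exists>k'. ?P k'" using stutter_equiv_matching_position[OF se j] by metis
  then have j': "?P j'" unfolding j'_def by (rule LeastI_ex)
  moreover have "\<exists>i<j. enat i \<le> len \<and> enat i' \<le> len' \<and> changes l i = changes l' i'" if "i' < j'" for i'
  proof -
    have i': "enat i' \<le> len'" using that j' order_trans[of "enat i'" "enat j'"] by simp
    have "changes l' i' \<noteq> changes l j" using not_less_Least[OF that[unfolded j'_def]] i' by blast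
    then have lt: "changes l' i' < changes l j" using j' changes_mono[of i' j' l'] that by simp
    obtain i where i: "enat i \<le> len" "changes l i = changes l' i'"
      using stutter_equiv_matching_position[OF stutter_equiv_sym[OF se] i'] by metis
    have "i < j" using lt i(2) changes_mono[of j i l] by (cases "j \<le> i") auto
    with i i' show ?thesis by blast
  qed
  ultimately show ?thesis using that by blast
qed

lemma sat_path_stutter_invariant:
  "stutter_equiv (\<lambda>n. L (st n)) len (\<lambda>n. L (st' n)) len' \<Longrightarrow>
   sat_path L \<psi> st len \<longleftrightarrow> sat_path L \<psi> st' len'"
proof (induction \<psi> arbitrary: st st' len len')
  case (Atom p)
  then have "L (st 0) = L (st' 0)"
    using stutter_equiv_label_eq[of _ len _ len' 0 0] by (simp add: zero_enat_def[symmetric])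
  then show ?case by simp
next
  case (Until \<psi>1 \<psi>2)
  have until: "sat_path L (Until \<psi>1 \<psi>2) st' len'"
    if se: "stutter_equiv (\<lambda>n. L (st n)) len (\<lambda>n. L (st' n)) len'"
      and sat: "sat_path L (Until \<psi>1 \<psi>2) st len" for st st' len len'
  proof -
    obtain j where j: "enat j \<le> len" "sat_path L \<psi>2 (\<lambda>n. st (n + j)) (len - enat j)"
      "\<forall>i<j. sat_path L \<psi>1 (\<lambda>n. st (n + i)) (len - enat i)" using sat by auto
    obtain j' where j': "enat j' \<le> len'" "changes (\<lambda>n. L (st' n)) j' = changes (\<lambda>n. L (st n)) j"
      and before: "\<And>i'. i' < j' \<Longrightarrow> \<exists>i<j. enat i \<le> len \<and> enat i' \<le> len' \<and>
                     changes (\<lambda>n. L (st n)) i = changes (\<lambda>n. L (st' n)) i'"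
      using stutter_equiv_until_position[OF se j(1)] by metis
    have "sat_path L \<psi>2 (\<lambda>n. st' (n + j')) (len' - enat j')"
      using Until.IH(2)[OF stutter_equiv_suffix[OF se j(1) j'(1) j'(2)[symmetric]]] j(2) by simp
    moreover have "sat_path L \<psi>1 (\<lambda>n. st' (n + i')) (len' - enat i')" if "i' < j'" for i'
      using before[OF that] j(3) Until.IH(1)[OF stutter_equiv_suffix[OF se]] by fastforce
    ultimately show ?thesis using j'(1) by auto
  qed
  show ?case using until Until.prems until[OF stutter_equiv_sym[OF Until.prems]] by blast
qed auto

section \<open>Characteristic formulas of stutter classes\<close>

text \<open>The injection \<open>f\<close> supplies conjunction indices: \<open>f (Inl p)\<close> for atomic propositions
  and \<open>f (Inr n)\<close> for numbered conjuncts.\<close>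

definition ltl_true :: "('ap,'i) ltl" where
  "ltl_true = Conj {} (\<lambda>_. undefined)"

definition ltl_and :: "('ap + nat \<Rightarrow> 'i) \<Rightarrow> ('ap,'i) ltl \<Rightarrow> ('ap,'i) ltl \<Rightarrow> ('ap,'i) ltl" where
  "ltl_and f \<phi> \<psi> = Conj {f (Inr 0), f (Inr 1)} (\<lambda>i. if i = f (Inr 0) then \<phi> else \<psi>)"

definition ltl_always :: "('ap,'i) ltl \<Rightarrow> ('ap,'i) ltl" where
  "ltl_always \<phi> = Neg (Until ltl_true (Neg \<phi>))"

definition label_is :: "('ap + nat \<Rightarrow> 'i) \<Rightarrow> 'ap set \<Rightarrow> ('ap,'i) ltl" where
  "label_is f A = Conj (range (\<lambda>p. f (Inl p)))
     (\<lambda>i. let p = inv (\<lambda>p. f (Inl p)) i in if p \<in> A then Atom p else Neg (Atom p))"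

lemma sat_ltl_true: "sat_path L ltl_true st len"
  by (simp add: ltl_true_def)

lemma sat_ltl_and:
  assumes "inj f"
  shows "sat_path L (ltl_and f \<phi> \<psi>) st len \<longleftrightarrow> sat_path L \<phi> st len \<and> sat_path L \<psi> st len"
proof -
  have "f (Inr 0) \<noteq> f (Inr 1)" using assms by (auto dest: injD)
  then show ?thesis by (auto simp: ltl_and_def)
qed

lemma sat_ltl_always:
  "sat_path L (ltl_always \<phi>) st len \<longleftrightarrow>
   (\<forall>j. enat j \<le> len \<longrightarrow> sat_path L \<phi> (\<lambda>n. st (n + j)) (len - enat j))"
  by (simp add: ltl_always_def sat_ltl_true)

lemma sat_label_is:
  assumes "inj f"
  shows "sat_path L (label_is f A) st len \<longleftrightarrow> L (st 0) = A"
proof -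
  have inj: "inj (\<lambda>p. f (Inl p))" using assms by (auto simp: inj_def)
  then have "sat_path L (label_is f A) st len \<longleftrightarrow> (\<forall>p. p \<in> A \<longleftrightarrow> p \<in> L (st 0))"
    by (auto simp: label_is_def Let_def inv_f_f[OF inj])
  then show ?thesis by blast
qed

text \<open>\<open>block_formula f B n final\<close> says that the path runs through the blocks
  \<open>B 0, \<dots>, B n\<close> and, if \<open>final\<close>, never leaves block \<open>B n\<close>.\<close>

fun block_formula :: "('ap + nat \<Rightarrow> 'i) \<Rightarrow> (nat \<Rightarrow> 'ap set) \<Rightarrow> nat \<Rightarrow> bool \<Rightarrow> ('ap,'i) ltl" where
  "block_formula f B 0 final =
     (if final then ltl_and f (label_is f (B 0)) (ltl_always (label_is f (B 0)))
      else label_is f (B 0))"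
| "block_formula f B (Suc n) final =
     ltl_and f (label_is f (B 0)) (Until (label_is f (B 0)) (block_formula f (\<lambda>m. B (Suc m)) n final))"

definition all_blocks_formula :: "('ap + nat \<Rightarrow> 'i) \<Rightarrow> (nat \<Rightarrow> 'ap set) \<Rightarrow> ('ap,'i) ltl" where
  "all_blocks_formula f B =
     Conj (range (\<lambda>n. f (Inr n))) (\<lambda>i. block_formula f B (inv (\<lambda>n. f (Inr n)) i) False)"

definition follows_blocks :: "(nat \<Rightarrow> 'l) \<Rightarrow> enat \<Rightarrow> (nat \<Rightarrow> 'l) \<Rightarrow> nat \<Rightarrow> bool" where
  "follows_blocks l len B n \<longleftrightarrow> n \<in> block_range l len \<and>
     (\<forall>k. enat k \<le> len \<longrightarrow> changes l k \<le> n \<longrightarrow> l k = B (changes l k))"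

lemma follows_blocks_0_iff: "follows_blocks l len B 0 \<longleftrightarrow> l 0 = B 0"
proof
  show "follows_blocks l len B 0 \<Longrightarrow> l 0 = B 0"
    unfolding follows_blocks_def by (metis changes.simps(1) le_refl zero_enat_def zero_le)
next
  assume l0: "l 0 = B 0"
  have "l k = B 0" if "changes l k = 0" for k
    using changes_eq_imp_eq[of l k 0] that l0 by simp
  then show "follows_blocks l len B 0"
    unfolding follows_blocks_def by (simp add: zero_in_block_range)
qed

lemma block_range_subset_0_iff:
  "block_range l len \<subseteq> {0} \<longleftrightarrow> (\<forall>k. enat k \<le> len \<longrightarrow> l k = l 0)"
proof
  assume sub: "block_range l len \<subseteq> {0}"
  show "\<forall>k. enat k \<le> len \<longrightarrow> l k = l 0"
  proof (intro allI impI)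
    fix k assume "enat k \<le> len"
    with sub have "changes l k = changes l 0" using changes_in_block_range by fastforce
    then show "l k = l 0" by (rule changes_eq_imp_eq)
  qed
next
  assume all: "\<forall>k. enat k \<le> len \<longrightarrow> l k = l 0"
  have "changes l k = 0" if "enat k \<le> len" for k
    unfolding changes_eq_0_iff using all that by (meson enat_ord_simps(1) order_trans)
  then show "block_range l len \<subseteq> {0}" unfolding block_range_def by auto
qed

lemma follows_blocks_mono: "follows_blocks l len B n \<Longrightarrow> m \<le> n \<Longrightarrow> follows_blocks l len B m"
  unfolding follows_blocks_def using block_range_downward_closed le_trans by blast

lemma follows_blocks_block_label: "n \<in> block_range l len \<Longrightarrow> follows_blocks l len (block_label l len) n"
  unfolding follows_blocks_def by (simp add: block_label_changes)

lemma first_change_exists: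
  assumes "Suc n \<in> block_range l len"
  obtains j where "enat j \<le> len" "0 < j" "\<forall>i<j. l i = l 0" "l j \<noteq> l 0"
proof -
  obtain k where k: "enat k \<le> len" "changes l k = Suc n"
    using assms mem_block_range_iff by blast
  have "\<not> (\<forall>i\<le>k. l i = l 0)" by (subst changes_eq_0_iff[symmetric]) (simp add: k(2))
  then obtain i where i: "i \<le> k" "l i \<noteq> l 0" by blast
  define j where "j = (LEAST i. l i \<noteq> l 0)"
  have j: "l j \<noteq> l 0" unfolding j_def using i(2) by (rule LeastI)
  then have "0 < j" by (cases j) auto
  moreover have "j \<le> k" unfolding j_def using i by (meson Least_le order_trans)
  then have "enat j \<le> len" using k(1) by (meson enat_ord_simps(1) order_trans)
  moreover have "\<forall>i<j. l i = l 0" unfolding j_def using not_less_Least by blast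
  ultimately show ?thesis using that j by blast
qed

lemma block_range_first_block:
  assumes "enat j \<le> len" "0 < j" "\<forall>i<j. l i = l 0" "l j \<noteq> l 0"
  shows "block_range l len = insert 0 (Suc ` block_range (\<lambda>n. l (n + j)) (len - enat j))"
proof (intro set_eqI iffI)
  fix m assume "m \<in> block_range l len"
  then obtain k where k: "enat k \<le> len" "changes l k = m" using mem_block_range_iff by blast
  show "m \<in> insert 0 (Suc ` block_range (\<lambda>n. l (n + j)) (len - enat j))"
  proof (cases "k < j")
    case False
    then have "enat (k - j) \<le> len - enat j" using k(1) enat_le_diff_iff[OF assms(1)] by simp
    then show ?thesis
      using k(2) changes_first_block[OF assms(3,4), of k] False changes_in_block_range by auto
  qed (use k changes_first_block[OF assms(3,4), of k] in simp)
next
  fix m assume "m \<in> insert 0 (Suc ` block_range (\<lambda>n. l (n + j)) (len - enat j))"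
  then consider "m = 0" | d where "enat d \<le> len - enat j" "m = Suc (changes (\<lambda>n. l (n + j)) d)"
    by (force simp: mem_block_range_iff)
  then show "m \<in> block_range l len"
  proof cases
    case (2 d)
    then have "enat (d + j) \<le> len" "changes l (d + j) = m"
      using enat_le_diff_iff[OF assms(1)] changes_first_block[OF assms(3,4), of "d + j"] by simp_all
    then show ?thesis unfolding mem_block_range_iff by blast
  qed (simp add: zero_in_block_range)
qed

lemma follows_blocks_first_block:
  assumes j: "enat j \<le> len" "0 < j" "\<forall>i<j. l i = l 0" "l j \<noteq> l 0" and l0: "l 0 = B 0"
  shows "follows_blocks l len B (Suc n) \<longleftrightarrow>
         follows_blocks (\<lambda>k. l (k + j)) (len - enat j) (\<lambda>m. B (Suc m)) n"
proof -
  let ?s = "\<lambda>k. l (k + j)"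
  have shift: "changes l k = (if k < j then 0 else Suc (changes ?s (k - j)))" for k
    by (rule changes_first_block[OF j(3,4)])
  have range: "Suc n \<in> block_range l len \<longleftrightarrow> n \<in> block_range ?s (len - enat j)"
    unfolding block_range_first_block[OF j] by auto
  have "(\<forall>k. enat k \<le> len \<longrightarrow> changes l k \<le> Suc n \<longrightarrow> l k = B (changes l k)) \<longleftrightarrow>
        (\<forall>d. enat d \<le> len - enat j \<longrightarrow> changes ?s d \<le> n \<longrightarrow> ?s d = B (Suc (changes ?s d)))"
  proof (intro iffI allI impI)
    fix d assume "\<forall>k. enat k \<le> len \<longrightarrow> changes l k \<le> Suc n \<longrightarrow> l k = B (changes l k)"
      and "enat d \<le> len - enat j" "changes ?s d \<le> n"
    then show "?s d = B (Suc (changes ?s d))"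
      using shift[of "d + j"] enat_le_diff_iff[OF j(1)] by simp
  next
    fix k assume d: "\<forall>d. enat d \<le> len - enat j \<longrightarrow> changes ?s d \<le> n \<longrightarrow> ?s d = B (Suc (changes ?s d))"
      and k: "enat k \<le> len" "changes l k \<le> Suc n"
    show "l k = B (changes l k)"
    proof (cases "k < j")
      case True
      then show ?thesis using shift[of k] j(3) l0 by simp
    next
      case False
      then have "k - j + j = k" by simp
      then show ?thesis
        using shift[of k] False d[rule_format, of "k - j"] enat_le_diff_iff[OF j(1), of "k - j"] k
        by simp
    qed
  qed
  with range show ?thesis unfolding follows_blocks_def by blast
qed

lemma follows_blocks_Suc_iff:
  assumes "B 0 \<noteq> B 1"
  shows "follows_blocks l len B (Suc n) \<and> (final \<longrightarrow> block_range l len \<subseteq> {..Suc n}) \<longleftrightarrow>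
    l 0 = B 0 \<and> (\<exists>j. enat j \<le> len \<and> (\<forall>i<j. l i = B 0) \<and>
      follows_blocks (\<lambda>k. l (k + j)) (len - enat j) (\<lambda>m. B (Suc m)) n \<and>
      (final \<longrightarrow> block_range (\<lambda>k. l (k + j)) (len - enat j) \<subseteq> {..n}))"
    (is "?lhs \<longleftrightarrow> ?rhs")
proof -
  have bounded: "block_range l len \<subseteq> {..Suc n} \<longleftrightarrow>
      block_range (\<lambda>k. l (k + j)) (len - enat j) \<subseteq> {..n}"
    if "enat j \<le> len" "0 < j" "\<forall>i<j. l i = l 0" "l j \<noteq> l 0" for j
    unfolding block_range_first_block[OF that] by auto
  show ?thesis
  proof
    assume ?lhs
    then have l0: "l 0 = B 0" using follows_blocks_mono[of l len B "Suc n" 0]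
      by (simp add: follows_blocks_0_iff)
    obtain j where "enat j \<le> len" "0 < j" "\<forall>i<j. l i = l 0" "l j \<noteq> l 0"
      using \<open>?lhs\<close> first_change_exists unfolding follows_blocks_def by blast
    with \<open>?lhs\<close> l0 show ?rhs
      using follows_blocks_first_block bounded by metis
  next
    assume ?rhs
    then obtain j where j: "enat j \<le> len" "\<forall>i<j. l i = B 0"
      and suffix: "follows_blocks (\<lambda>k. l (k + j)) (len - enat j) (\<lambda>m. B (Suc m)) n"
      and final: "final \<longrightarrow> block_range (\<lambda>k. l (k + j)) (len - enat j) \<subseteq> {..n}"
      and l0: "l 0 = B 0" by blast
    have "l j = B 1" using follows_blocks_mono[OF suffix, of 0] by (simp add: follows_blocks_0_iff)
    with assms l0 have "l j \<noteq> l 0" by simp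
    moreover from this have "0 < j" by (cases j) auto
    moreover have "\<forall>i<j. l i = l 0" using j(2) l0 by simp
    ultimately show ?lhs
      using follows_blocks_first_block[OF j(1)] bounded[OF j(1)] suffix final l0 by blast
  qed
qed

lemma sat_block_formula:
  assumes "inj f" and "\<forall>i<n. B i \<noteq> B (Suc i)"
  shows "sat_path L (block_formula f B n final) st len \<longleftrightarrow>
    follows_blocks (\<lambda>k. L (st k)) len B n \<and> (final \<longrightarrow> block_range (\<lambda>k. L (st k)) len \<subseteq> {..n})"
  using assms(2)
proof (induction n arbitrary: B st len)
  case 0
  show ?case
    by (cases "L (st 0) = B 0") (simp_all add: sat_ltl_and[OF assms(1)] sat_label_is[OF assms(1)]
        sat_ltl_always follows_blocks_0_iff block_range_subset_0_iff)
next
  case (Suc n)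
  have B01: "B 0 \<noteq> B 1" using Suc.prems by auto
  have "\<forall>i<n. B (Suc i) \<noteq> B (Suc (Suc i))" using Suc.prems by simp
  note IH = Suc.IH[OF this]
  show ?case
    unfolding block_formula.simps sat_ltl_and[OF assms(1)] sat_path.simps sat_label_is[OF assms(1)]
      IH follows_blocks_Suc_iff[OF B01]
    by auto
qed

lemma sat_all_blocks_formula:
  assumes "inj f" and "\<forall>i. B i \<noteq> B (Suc i)"
  shows "sat_path L (all_blocks_formula f B) st len \<longleftrightarrow> (\<forall>n. follows_blocks (\<lambda>k. L (st k)) len B n)"
proof -
  have inj: "inj (\<lambda>n. f (Inr n))" using assms(1) by (auto simp: inj_def)
  have "sat_path L (all_blocks_formula f B) st len \<longleftrightarrow> (\<forall>n. sat_path L (block_formula f B n False) st len)"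
    by (simp add: all_blocks_formula_def inv_f_f[OF inj])
  also have "\<dots> \<longleftrightarrow> (\<forall>n. follows_blocks (\<lambda>k. L (st k)) len B n)"
    using assms by (simp add: sat_block_formula)
  finally show ?thesis .
qed

lemma stutter_equiv_if_follows_blocks:
  assumes "\<And>k. enat k \<le> len \<Longrightarrow> l k = B (changes l k)"
    and "\<And>n. n \<in> block_range l len \<Longrightarrow> follows_blocks l' len' B n"
    and "block_range l' len' \<subseteq> block_range l len"
  shows "stutter_equiv l len l' len'"
proof (rule stutter_equivI[where B = B])
  show "l k = B (changes l k)" if "enat k \<le> len" for k using that by (rule assms(1))
  show "block_range l len = block_range l' len'"
    using assms(2,3) unfolding follows_blocks_def by blast
  show "l' k = B (changes l' k)" if "enat k \<le> len'" for k
    using assms(2,3) changes_in_block_range[OF that] that unfolding follows_blocks_def by blast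
qed

text \<open>With finitely many blocks the last one has to be pinned down as well; with infinitely
  many, the path is characterised by the conjunction of all its finite block prefixes.\<close>

lemma characteristic_formula:
  fixes f :: "'ap + nat \<Rightarrow> 'i"
  assumes f: "inj f"
  obtains \<Phi> :: "('ap,'i) ltl" where "sat_path L \<Phi> st len"
    and "\<And>st' len'. sat_path L \<Phi> st' len' \<Longrightarrow> stutter_equiv (\<lambda>k. L (st k)) len (\<lambda>k. L (st' k)) len'"
proof -
  let ?l = "\<lambda>k. L (st k)" and ?R = "block_range (\<lambda>k. L (st k)) len"
  define B where "B = block_label ?l len"
  have labels: "?l k = B (changes ?l k)" if "enat k \<le> len" for k
    unfolding B_def using block_label_changes[OF that, of ?l] by simp
  have stutter_free: "\<forall>i<n. B i \<noteq> B (Suc i)" if "n \<in> ?R" for n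
    unfolding B_def using block_label_Suc_neq block_range_downward_closed[OF that] by (meson Suc_leI)
  have follows: "follows_blocks ?l len B n" if "n \<in> ?R" for n
    unfolding B_def using that by (rule follows_blocks_block_label)
  show ?thesis
  proof (cases "finite ?R")
    case True
    define M where "M = Max ?R"
    have M: "M \<in> ?R" unfolding M_def using Max_in[OF True] zero_in_block_range by blast
    have bounded: "?R \<subseteq> {..M}" unfolding M_def using True by auto
    note sat = sat_block_formula[OF f stutter_free[OF M], where L = L and final = True]
    show ?thesis
    proof (rule that[of "block_formula f B M True"])
      show "sat_path L (block_formula f B M True) st len" using sat M bounded follows by simp
      fix st' len' assume "sat_path L (block_formula f B M True) st' len'"
      then show "stutter_equiv ?l len (\<lambda>k. L (st' k)) len'"
        using block_range_eq_atMost[OF M bounded] sat follows_blocks_mono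
        by (intro stutter_equiv_if_follows_blocks[where B = B] labels) auto
    qed
  next
    case False
    then have all: "n \<in> ?R" for n
      using block_range_downward_closed infinite_nat_iff_unbounded_le by meson
    note sat = sat_all_blocks_formula[OF f, where L = L]
    show ?thesis
    proof (rule that[of "all_blocks_formula f B"])
      show "sat_path L (all_blocks_formula f B) st len" using sat stutter_free all follows by blast
      fix st' len' assume "sat_path L (all_blocks_formula f B) st' len'"
      then show "stutter_equiv ?l len (\<lambda>k. L (st' k)) len'"
        using all sat stutter_free by (intro stutter_equiv_if_follows_blocks[where B = B] labels) blast+
    qed
  qed
qed

section \<open>Enumerating a set of natural numbers\<close>

definition ecard :: "nat set \<Rightarrow> enat" where
  "ecard V = (if finite V then enat (card V) else \<infinity>)"

lemma ecard_enumerate_in_set: "enat n < ecard V \<Longrightarrow> enumerate V n \<in> V"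
  by (cases "finite V") (simp_all add: ecard_def finite_enumerate_in_set enumerate_in_set)

lemma ecard_enumerate_mono: "m < n \<Longrightarrow> enat n < ecard V \<Longrightarrow> enumerate V m < enumerate V n"
  by (cases "finite V") (simp_all add: ecard_def finite_enumerate_mono enumerate_mono)

lemma ecard_enumerate_Ex: "k \<in> V \<Longrightarrow> \<exists>n. enat n < ecard V \<and> enumerate V n = k"
  by (cases "finite V") (auto simp: ecard_def dest: finite_enumerate_Ex enumerate_Ex)

lemma card_less_enumerate:
  assumes "enat n < ecard V"
  shows "card {x\<in>V. x < enumerate V n} = n"
proof -
  have mono: "strict_mono_on {..n} (enumerate V)"
    using assms by (intro strict_mono_onI ecard_enumerate_mono) (auto intro: le_less_trans[of _ "enat n"])
  have "{x\<in>V. x < enumerate V n} = enumerate V ` {..<n}"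
  proof (intro set_eqI iffI)
    fix x assume x: "x \<in> {x\<in>V. x < enumerate V n}"
    then obtain m where m: "enat m < ecard V" "enumerate V m = x" using ecard_enumerate_Ex by blast
    have "m < n"
    proof (rule ccontr)
      assume "\<not> m < n"
      then have "enumerate V n \<le> enumerate V m"
        using ecard_enumerate_mono[of n m V] m(1) by (cases "n = m") auto
      with x m(2) show False by simp
    qed
    with m(2) show "x \<in> enumerate V ` {..<n}" by blast
  next
    fix x assume "x \<in> enumerate V ` {..<n}"
    then obtain m where m: "m < n" "x = enumerate V m" by blast
    then have "enat m < ecard V" using assms by (meson enat_ord_simps(2) order.strict_trans)
    then show "x \<in> {x\<in>V. x < enumerate V n}"
      using m assms ecard_enumerate_in_set ecard_enumerate_mono by blast
  qed
  moreover have "inj_on (enumerate V) {..<n}"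
    using strict_mono_on_imp_inj_on[OF mono] by (rule inj_on_subset) auto
  ultimately show ?thesis by (simp add: card_image)
qed

lemma sorted_list_of_set_eq_map_enumerate:
  assumes "finite V"
  shows "sorted_list_of_set V = map (enumerate V) [0..<card V]"
proof -
  let ?xs = "map (enumerate V) [0..<card V]"
  have "sorted_wrt (<) ?xs"
    using assms by (simp add: sorted_wrt_iff_nth_less finite_enumerate_mono)
  moreover have "set ?xs = V"
    using bij_betw_imp_surj_on[OF finite_bij_enumerate[OF assms]] by (simp add: lessThan_atLeast0)
  ultimately show ?thesis using sorted_list_of_set_unique[OF assms, of ?xs] by simp
qed

lemma inj_enat_le_set: "inj (\<lambda>c. {m. enat m \<le> c})"
proof (rule injI)
  have le: "c \<le> c'" if sub: "{m. enat m \<le> c} \<subseteq> {m. enat m \<le> c'}" for c c' :: enat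
  proof (cases c')
    case (enat b)
    then have "\<not> enat (Suc b) \<le> c'" by simp
    with sub have "\<not> enat (Suc b) \<le> c" by blast
    then obtain a where "c = enat a" by (cases c) auto
    with sub show ?thesis by auto
  qed simp
  fix c c' :: enat assume "{m. enat m \<le> c} = {m. enat m \<le> c'}"
  then show "c = c'" using le by (simp add: order.antisym)
qed

section \<open>Label changes and visible steps\<close>

definition change_steps :: "(nat \<Rightarrow> 'l) \<Rightarrow> enat \<Rightarrow> nat set" where
  "change_steps l len = {k. enat (Suc k) \<le> len \<and> l k \<noteq> l (Suc k)}"

lemma changes_eq_card: "enat k \<le> len \<Longrightarrow> changes l k = card {x \<in> change_steps l len. x < k}"
proof (induction k)
  case (Suc k)
  have "enat k \<le> len" using Suc.prems by (meson Suc_ile_eq less_imp_le)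
  moreover have "{x \<in> change_steps l len. x < Suc k} =
      (if l k = l (Suc k) then {x \<in> change_steps l len. x < k} else insert k {x \<in> change_steps l len. x < k})"
    using Suc.prems by (auto simp: change_steps_def less_Suc_eq)
  ultimately show ?case using Suc.IH by simp
qed simp

lemma changes_enumerate:
  fixes l :: "nat \<Rightarrow> 'l" and len :: enat and n :: nat
  defines "e \<equiv> enumerate (change_steps l len) n"
  assumes "enat n < ecard (change_steps l len)"
  shows "changes l e = n" and "l e \<noteq> l (Suc e)" and "enat (Suc e) \<le> len"
proof -
  have e: "e \<in> change_steps l len" unfolding e_def using assms(2) by (rule ecard_enumerate_in_set)
  then show "l e \<noteq> l (Suc e)" and len: "enat (Suc e) \<le> len" unfolding change_steps_def by simp_all
  from len have "enat e \<le> len" by (meson Suc_ile_eq less_imp_le)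
  then show "changes l e = n"
    using changes_eq_card[of e len l] card_less_enumerate[OF assms(2)] unfolding e_def by simp
qed

lemma block_label_enumerate:
  fixes l :: "nat \<Rightarrow> 'l" and len :: enat and n :: nat
  defines "e \<equiv> enumerate (change_steps l len) n"
  assumes "enat n < ecard (change_steps l len)"
  shows "block_label l len n = l e" and "block_label l len (Suc n) = l (Suc e)"
proof -
  note e = changes_enumerate[OF assms(2), folded e_def]
  have "enat e \<le> len" using e(3) by (meson Suc_ile_eq less_imp_le)
  then show "block_label l len n = l e" using block_label_changes e(1) by metis
  show "block_label l len (Suc n) = l (Suc e)"
    using block_label_changes[OF e(3), of l] e(1,2) by simp
qed

lemma block_range_eq_ecard: "block_range l len = {m. enat m \<le> ecard (change_steps l len)}"
proof (intro set_eqI iffI CollectI)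
  fix m assume "m \<in> block_range l len"
  then obtain k where k: "enat k \<le> len" "changes l k = m" using mem_block_range_iff by blast
  have "card {x \<in> change_steps l len. x < k} \<le> card (change_steps l len)"
    if "finite (change_steps l len)"
    using that by (intro card_mono) auto
  then show "enat m \<le> ecard (change_steps l len)"
    using k changes_eq_card[OF k(1), of l] by (auto simp: ecard_def)
next
  fix m assume "m \<in> {m. enat m \<le> ecard (change_steps l len)}"
  then show "m \<in> block_range l len"
  proof (cases m)
    case (Suc n)
    with \<open>m \<in> _\<close> have "enat n < ecard (change_steps l len)" by (simp add: Suc_ile_eq)
    then show ?thesis
      using changes_enumerate[of n l len] Suc
        changes_in_block_range[of "Suc (enumerate (change_steps l len) n)" len l] by simp
  qed (simp add: zero_in_block_range)
qed

section \<open>Coloured traces in consistent L2TSs\<close>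

definition action_trace :: "nat set \<Rightarrow> (nat \<Rightarrow> 'a) \<Rightarrow> ('a, unit) ctrace" where
  "action_trace V ac = (if finite V then FinT () (map (\<lambda>k. (ac k, ())) (sorted_list_of_set V))
     else InfT () (\<lambda>n. (ac (enumerate V n), ())))"

lemma coloured_trace_trivial:
  "coloured_trace tau (\<lambda>_. ()) st ac len = action_trace (visible_steps tau (\<lambda>_. ()) st ac len) ac"
  by (simp add: coloured_trace_def action_trace_def Let_def)

lemma action_trace_eq_iff:
  "action_trace V ac = action_trace V' ac' \<longleftrightarrow>
   ecard V = ecard V' \<and> (\<forall>n. enat n < ecard V \<longrightarrow> ac (enumerate V n) = ac' (enumerate V' n))"
  by (cases "finite V"; cases "finite V'")
    (auto simp: action_trace_def ecard_def sorted_list_of_set_eq_map_enumerate fun_eq_iff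
      list_eq_iff_nth_eq)

lemma consistent_l2tsD:
  assumes "consistent_l2ts tau (L, R)"
  shows "(s, a, t) \<in> R \<Longrightarrow> L s = L t \<longleftrightarrow> a = tau"
    and "(s, a, t) \<in> R \<Longrightarrow> (s', a, t') \<in> R \<Longrightarrow> L s = L s' \<Longrightarrow> L t = L t'"
    and "(s, a, t) \<in> R \<Longrightarrow> (s', b, t') \<in> R \<Longrightarrow> L s = L s' \<Longrightarrow> L t = L t' \<Longrightarrow> a = b"
  using assms unfolding consistent_l2ts_def by blast+

lemma visible_steps_eq_change_steps:
  assumes "consistent_l2ts tau (L, R)" and "is_path R st ac len"
  shows "visible_steps tau (\<lambda>_. ()) st ac len = change_steps (\<lambda>k. L (st k)) len"
  using assms consistent_l2tsD(1)[OF assms(1)]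
  unfolding visible_steps_def change_steps_def is_path_def by blast

lemma is_path_change_step:
  fixes st :: "nat \<Rightarrow> 'q" and L :: "'q \<Rightarrow> 'l" and len :: enat and n :: nat
  defines "e \<equiv> enumerate (change_steps (\<lambda>k. L (st k)) len) n"
  assumes "is_path R st ac len" and "enat n < ecard (change_steps (\<lambda>k. L (st k)) len)"
  shows "(st e, ac e, st (Suc e)) \<in> R"
  using assms(2) changes_enumerate(3)[OF assms(3)] unfolding is_path_def e_def by blast

lemma stutter_equiv_if_action_trace_eq:
  assumes c: "consistent_l2ts tau (L, R)"
    and p: "is_path R st ac len" and p': "is_path R st' ac' len'"
    and l0: "L (st 0) = L (st' 0)"
    and eq: "action_trace (change_steps (\<lambda>k. L (st k)) len) ac =
             action_trace (change_steps (\<lambda>k. L (st' k)) len') ac'"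
  shows "stutter_equiv (\<lambda>k. L (st k)) len (\<lambda>k. L (st' k)) len'"
proof -
  let ?l = "\<lambda>k. L (st k)" and ?l' = "\<lambda>k. L (st' k)"
  define V where "V = change_steps ?l len"
  define V' where "V' = change_steps ?l' len'"
  have card: "ecard V = ecard V'"
    and act: "\<And>n. enat n < ecard V \<Longrightarrow> ac (enumerate V n) = ac' (enumerate V' n)"
    using eq unfolding action_trace_eq_iff V_def V'_def by simp_all
  have "block_label ?l len m = block_label ?l' len' m" if "enat m \<le> ecard V" for m
    using that
  proof (induction m)
    case 0
    then show ?case
      using block_label_changes[of 0 len ?l] block_label_changes[of 0 len' ?l'] l0
      by (simp add: zero_enat_def[symmetric])
  next
    case (Suc m)
    then have m: "enat m < ecard V" "enat m < ecard V'" using card by (simp_all add: Suc_ile_eq)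
    define e where "e = enumerate V m"
    define e' where "e' = enumerate V' m"
    have "(st e, ac e, st (Suc e)) \<in> R" "(st' e', ac' e', st' (Suc e')) \<in> R"
      unfolding e_def e'_def V_def V'_def
      using is_path_change_step[OF p m(1)[unfolded V_def]] is_path_change_step[OF p' m(2)[unfolded V'_def]] .
    moreover have "ac e = ac' e'" unfolding e_def e'_def by (rule act[OF m(1)])
    moreover have "L (st e) = L (st' e')"
      using Suc.IH m(1) block_label_enumerate(1)[OF m(1)[unfolded V_def]]
        block_label_enumerate(1)[OF m(2)[unfolded V'_def]]
      unfolding e_def e'_def V_def V'_def by (simp add: order_less_imp_le)
    ultimately have "L (st (Suc e)) = L (st' (Suc e'))"
      using consistent_l2tsD(2)[OF c] by metis
    then show ?case
      using block_label_enumerate(2)[OF m(1)[unfolded V_def]]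
        block_label_enumerate(2)[OF m(2)[unfolded V'_def]]
      unfolding e_def e'_def V_def V'_def by simp
  qed
  then show ?thesis
    unfolding stutter_equiv_def block_range_eq_ecard V_def V'_def card[unfolded V_def V'_def] by simp
qed

lemma action_trace_eq_if_stutter_equiv:
  assumes c: "consistent_l2ts tau (L, R)"
    and p: "is_path R st ac len" and p': "is_path R st' ac' len'"
    and se: "stutter_equiv (\<lambda>k. L (st k)) len (\<lambda>k. L (st' k)) len'"
  shows "action_trace (change_steps (\<lambda>k. L (st k)) len) ac =
         action_trace (change_steps (\<lambda>k. L (st' k)) len') ac'"
proof -
  let ?l = "\<lambda>k. L (st k)" and ?l' = "\<lambda>k. L (st' k)"
  define V where "V = change_steps ?l len"
  define V' where "V' = change_steps ?l' len'"
  have range: "block_range ?l len = block_range ?l' len'"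
    and labels: "\<And>m. m \<in> block_range ?l len \<Longrightarrow> block_label ?l len m = block_label ?l' len' m"
    using se unfolding stutter_equiv_def by simp_all
  have card: "ecard V = ecard V'"
    using range injD[OF inj_enat_le_set, of "ecard V" "ecard V'"]
    unfolding block_range_eq_ecard V_def V'_def by simp
  have "ac (enumerate V n) = ac' (enumerate V' n)" if n: "enat n < ecard V" for n
  proof -
    have n': "enat n < ecard V'" using n card by simp
    have "n \<in> block_range ?l len" "Suc n \<in> block_range ?l len"
      using n unfolding block_range_eq_ecard V_def by (auto simp: Suc_ile_eq)
    then have "L (st (enumerate V n)) = L (st' (enumerate V' n))"
      "L (st (Suc (enumerate V n))) = L (st' (Suc (enumerate V' n)))"
      using labels block_label_enumerate[OF n[unfolded V_def]] block_label_enumerate[OF n'[unfolded V'_def]]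
      unfolding V_def V'_def by simp_all
    moreover have "(st (enumerate V n), ac (enumerate V n), st (Suc (enumerate V n))) \<in> R"
      "(st' (enumerate V' n), ac' (enumerate V' n), st' (Suc (enumerate V' n))) \<in> R"
      unfolding V_def V'_def
      using is_path_change_step[OF p n[unfolded V_def]] is_path_change_step[OF p' n'[unfolded V'_def]] .
    ultimately show ?thesis using consistent_l2tsD(3)[OF c] by blast
  qed
  with card show ?thesis unfolding action_trace_eq_iff V_def V'_def by blast
qed

lemma coloured_trace_eq_iff_stutter_equiv:
  assumes c: "consistent_l2ts tau (L, R)"
    and p: "is_path R st ac len" and p': "is_path R st' ac' len'"
    and l0: "L (st 0) = L (st' 0)"
  shows "coloured_trace tau (\<lambda>_. ()) st ac len = coloured_trace tau (\<lambda>_. ()) st' ac' len' \<longleftrightarrow>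
         stutter_equiv (\<lambda>k. L (st k)) len (\<lambda>k. L (st' k)) len'"
  unfolding coloured_trace_trivial visible_steps_eq_change_steps[OF c p]
    visible_steps_eq_change_steps[OF c p']
  using stutter_equiv_if_action_trace_eq[OF c p p' l0] action_trace_eq_if_stutter_equiv[OF c p p']
  by blast

section \<open>Maximal paths\<close>

lemma is_maximal_kpath_iff:
  "is_maximal_kpath {(u, v). \<exists>a. (u, a, v) \<in> R} st len \<longleftrightarrow> (\<exists>ac. is_maximal_path R st ac len)"
proof
  assume kpath: "is_maximal_kpath {(u, v). \<exists>a. (u, a, v) \<in> R} st len"
  define ac where "ac k = (SOME a. (st k, a, st (Suc k)) \<in> R)" for k
  have "is_path R st ac len"
    unfolding is_path_def
  proof (intro allI impI)
    fix k assume "enat (Suc k) \<le> len"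
    then have "\<exists>a. (st k, a, st (Suc k)) \<in> R" using kpath unfolding is_maximal_kpath_def by blast
    then show "(st k, ac k, st (Suc k)) \<in> R" unfolding ac_def by (rule someI_ex)
  qed
  with kpath show "\<exists>ac. is_maximal_path R st ac len"
    unfolding is_maximal_path_def is_maximal_kpath_def by blast
qed (auto simp: is_maximal_path_def is_maximal_kpath_def is_path_def)

lemma maximal_kpath_exists: "\<exists>st len. is_maximal_kpath K st len \<and> st 0 = q"
proof -
  define nx where "nx u = (SOME v. (u, v) \<in> K)" for u
  define st where "st k = (nx ^^ k) q" for k
  have st0: "st 0 = q" by (simp add: st_def)
  have step: "(st k, st (Suc k)) \<in> K" if "\<exists>v. (st k, v) \<in> K" for k
  proof -
    have "st (Suc k) = nx (st k)" by (simp add: st_def)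
    then show ?thesis unfolding nx_def using someI_ex[OF that] by simp
  qed
  show ?thesis
  proof (cases "\<forall>k. \<exists>v. (st k, v) \<in> K")
    case True
    then have "is_maximal_kpath K st \<infinity>" unfolding is_maximal_kpath_def using step by blast
    with st0 show ?thesis by blast
  next
    case False
    define n where "n = (LEAST k. \<not> (\<exists>v. (st k, v) \<in> K))"
    from False obtain k0 where "\<not> (\<exists>v. (st k0, v) \<in> K)" by blast
    then have "\<not> (\<exists>v. (st n, v) \<in> K)" unfolding n_def by (rule LeastI)
    moreover have "(st k, st (Suc k)) \<in> K" if "enat (Suc k) \<le> enat n" for k
    proof -
      from that have "k < n" by simp
      then show ?thesis using not_less_Least[of k] step unfolding n_def by blast
    qed
    ultimately have "is_maximal_kpath K st (enat n)" unfolding is_maximal_kpath_def by blast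
    with st0 show ?thesis by blast
  qed
qed

lemma maximal_path_exists: "\<exists>st ac len. is_maximal_path R st ac len \<and> st 0 = q"
proof -
  obtain st len where "is_maximal_kpath {(u, v). \<exists>a. (u, a, v) \<in> R} st len" "st 0 = q"
    using maximal_kpath_exists[of "{(u, v). \<exists>a. (u, a, v) \<in> R}" q] by blast
  then show ?thesis unfolding is_maximal_kpath_iff by blast
qed

lemma sat_state_kripke_of:
  "sat_state (kripke_of (L, R)) q \<psi> \<longleftrightarrow>
   (\<forall>st ac len. is_maximal_path R st ac len \<and> st 0 = q \<longrightarrow> sat_path L \<psi> st len)"
proof -
  have "kripke_of (L, R) = (L, {(u, v). \<exists>a. (u, a, v) \<in> R})" by (simp add: kripke_of_def)
  then have "sat_state (kripke_of (L, R)) q \<psi> \<longleftrightarrow> (\<forall>st len.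
      (\<exists>ac. is_maximal_path R st ac len) \<and> st 0 = q \<longrightarrow> sat_path L \<psi> st len)"
    unfolding sat_state_def by (simp only: fst_conv snd_conv is_maximal_kpath_iff)
  then show ?thesis by blast
qed

section \<open>Completed trace equivalence and LTL without next\<close>

lemma sat_state_if_complete_ctraces_subset:
  assumes c: "consistent_l2ts tau (L, R)" and uv: "L u = L v"
    and sub: "complete_ctraces tau R (\<lambda>_. ()) v \<subseteq> complete_ctraces tau R (\<lambda>_. ()) u"
    and sat: "sat_state (kripke_of (L, R)) u \<psi>"
  shows "sat_state (kripke_of (L, R)) v \<psi>"
  unfolding sat_state_kripke_of
proof (intro allI impI)
  fix st' ac' len' assume p': "is_maximal_path R st' ac' len' \<and> st' 0 = v"
  then have "coloured_trace tau (\<lambda>_. ()) st' ac' len' \<in> complete_ctraces tau R (\<lambda>_. ()) u"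
    using sub unfolding complete_ctraces_def by blast
  then obtain st ac len where p: "is_maximal_path R st ac len" "st 0 = u"
    and eq: "coloured_trace tau (\<lambda>_. ()) st ac len = coloured_trace tau (\<lambda>_. ()) st' ac' len'"
    unfolding complete_ctraces_def by auto
  have "is_path R st ac len" "is_path R st' ac' len'"
    using p(1) p' unfolding is_maximal_path_def by simp_all
  moreover have "L (st 0) = L (st' 0)" using p(2) p' uv by simp
  ultimately have se: "stutter_equiv (\<lambda>k. L (st k)) len (\<lambda>k. L (st' k)) len'"
    using coloured_trace_eq_iff_stutter_equiv[OF c] eq by blast
  have "sat_path L \<psi> st len" using sat p unfolding sat_state_kripke_of by blast
  with sat_path_stutter_invariant[where L = L and \<psi> = \<psi> and st = st and st' = st', OF se] show "sat_path L \<psi> st' len'" by simp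
qed

lemma stutter_equiv_path_if_ltl_equiv:
  fixes f :: "'ap + nat \<Rightarrow> 'i"
  assumes "inj f"
    and eqv: "\<forall>\<psi> :: ('ap,'i) ltl. sat_state (kripke_of (L, R)) u \<psi> \<longleftrightarrow> sat_state (kripke_of (L, R)) v \<psi>"
    and p: "is_maximal_path R st ac len" "st 0 = u"
  obtains st' ac' len' where "is_maximal_path R st' ac' len'" "st' 0 = v"
    and "stutter_equiv (\<lambda>k. L (st k)) len (\<lambda>k. L (st' k)) len'"
proof -
  obtain \<Phi> :: "('ap,'i) ltl" where \<Phi>: "sat_path L \<Phi> st len"
    and char: "\<And>st' len'. sat_path L \<Phi> st' len' \<Longrightarrow> stutter_equiv (\<lambda>k. L (st k)) len (\<lambda>k. L (st' k)) len'"
    using characteristic_formula[OF \<open>inj f\<close>, of L st len] by blast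
  have "\<not> sat_state (kripke_of (L, R)) u (Neg \<Phi>)"
    using p \<Phi> unfolding sat_state_kripke_of by auto
  then have "\<not> sat_state (kripke_of (L, R)) v (Neg \<Phi>)" using eqv by blast
  then show ?thesis using that char unfolding sat_state_kripke_of by auto
qed

lemma complete_ctraces_subset_if_ltl_equiv:
  fixes f :: "'ap + nat \<Rightarrow> 'i"
  assumes c: "consistent_l2ts tau (L, R)" and "inj f"
    and eqv: "\<forall>\<psi> :: ('ap,'i) ltl. sat_state (kripke_of (L, R)) u \<psi> \<longleftrightarrow> sat_state (kripke_of (L, R)) v \<psi>"
  shows "complete_ctraces tau R (\<lambda>_. ()) u \<subseteq> complete_ctraces tau R (\<lambda>_. ()) v"
proof
  fix x assume "x \<in> complete_ctraces tau R (\<lambda>_. ()) u"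
  then obtain st ac len where p: "is_maximal_path R st ac len" "st 0 = u"
    and x: "x = coloured_trace tau (\<lambda>_. ()) st ac len"
    unfolding complete_ctraces_def by blast
  obtain st' ac' len' where p': "is_maximal_path R st' ac' len'" "st' 0 = v"
    and se: "stutter_equiv (\<lambda>k. L (st k)) len (\<lambda>k. L (st' k)) len'"
    using stutter_equiv_path_if_ltl_equiv[OF \<open>inj f\<close> eqv p] by blast
  have "L (st 0) = L (st' 0)"
    using stutter_equiv_label_eq[OF se, of 0 0] by (simp add: zero_enat_def[symmetric])
  moreover have "is_path R st ac len" "is_path R st' ac' len'"
    using p(1) p'(1) unfolding is_maximal_path_def by simp_all
  ultimately have "x = coloured_trace tau (\<lambda>_. ()) st' ac' len'"
    using coloured_trace_eq_iff_stutter_equiv[OF c] se x by blast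
  with p' show "x \<in> complete_ctraces tau R (\<lambda>_. ()) v" unfolding complete_ctraces_def by blast
qed

lemma trace_eq_iff_ltl_equiv:
  fixes f :: "'ap + nat \<Rightarrow> 'i"
  assumes c: "consistent_l2ts tau (L, R)" and f: "inj f"
  shows "L u = L v \<and> trace_eq tau R u v \<longleftrightarrow>
    (\<forall>\<psi> :: ('ap,'i) ltl. sat_state (kripke_of (L, R)) u \<psi> \<longleftrightarrow> sat_state (kripke_of (L, R)) v \<psi>)"
proof
  assume "L u = L v \<and> trace_eq tau R u v"
  then show "\<forall>\<psi> :: ('ap,'i) ltl. sat_state (kripke_of (L, R)) u \<psi> \<longleftrightarrow> sat_state (kripke_of (L, R)) v \<psi>"
    using sat_state_if_complete_ctraces_subset[OF c, of u v] sat_state_if_complete_ctraces_subset[OF c, of v u]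
    unfolding trace_eq_def by auto
next
  assume eqv: "\<forall>\<psi> :: ('ap,'i) ltl. sat_state (kripke_of (L, R)) u \<psi> \<longleftrightarrow> sat_state (kripke_of (L, R)) v \<psi>"
  obtain st ac len where p: "is_maximal_path R st ac len" "st 0 = u"
    using maximal_path_exists by metis
  obtain st' ac' len' where "st' 0 = v" and se: "stutter_equiv (\<lambda>k. L (st k)) len (\<lambda>k. L (st' k)) len'"
    using stutter_equiv_path_if_ltl_equiv[OF f eqv p] by blast
  then have "L u = L v"
    using p(2) stutter_equiv_label_eq[OF se, of 0 0] by (simp add: zero_enat_def[symmetric])
  moreover have "trace_eq tau R u v"
    using complete_ctraces_subset_if_ltl_equiv[OF c f] eqv unfolding trace_eq_def by blast
  ultimately show "L u = L v \<and> trace_eq tau R u v" ..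
qed

theorem corollary9p3:
  fixes tau :: 'a
    and etaL :: "('s,'a) lts \<Rightarrow> ('q,'a,'ap) l2ts"
    and etaS :: "('s,'a) lts \<Rightarrow> 's \<Rightarrow> 'q"
    and R :: "('s,'a) lts"
    and s t :: 's
  assumes "lts_to_l2ts tau etaL etaS"
    and "preserves_reflects_trace_eq tau etaL etaS"
    and "\<exists>f :: 'ap + nat \<Rightarrow> 'i. inj f"
  shows "trace_eq tau R s t \<longleftrightarrow>
         (\<forall>\<psi> :: ('ap,'i) ltl. models_eta etaL etaS R s \<psi> \<longleftrightarrow> models_eta etaL etaS R t \<psi>)"
proof -
  obtain f :: "'ap + nat \<Rightarrow> 'i" where f: "inj f" using assms(3) by blast
  obtain L R' where M: "etaL R = (L, R')" by fastforce
  have c: "consistent_l2ts tau (L, R')" using assms(1) M unfolding lts_to_l2ts_def by metis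
  have "trace_eq tau R s t \<longleftrightarrow> l2_equiv (trace_eq tau) (etaL R) (etaS R s) (etaS R t)"
    using assms(2) unfolding preserves_reflects_trace_eq_def by blast
  also have "\<dots> \<longleftrightarrow> L (etaS R s) = L (etaS R t) \<and> trace_eq tau R' (etaS R s) (etaS R t)"
    unfolding l2_equiv_def M by simp
  also have "\<dots> \<longleftrightarrow> (\<forall>\<psi> :: ('ap,'i) ltl. models_eta etaL etaS R s \<psi> \<longleftrightarrow> models_eta etaL etaS R t \<psi>)"
    unfolding models_eta_def M by (rule trace_eq_iff_ltl_equiv[OF c f])
  finally show ?thesis .
qed

end
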